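(* There exist $\alpha>0$, $\gamma\in(0,1]$, integers $m\ge1$, $k\ge2$, a set $\mathcal{X}$, a class $\mathcal{H}$ of functions $\mathcal{X}\to\{0,1\}$, $\bar{x}\in\mathcal{X}^k$, a panel $\bar{j}=\bar{j}^{\alpha,\gamma}_{j^1,\dots,j^m}$ and $\pi\in\Delta\mathcal{H}$ such that simultaneously (1) $\mathbb{E}_{h\sim\pi}[Unfair^{\alpha,\gamma}(h,\bar{x},\bar{j})]=1$, and (2) $Unfair^{\alpha,\gamma}(\pi,\bar{x},\bar{j})=0$.
   Context: $\Delta\mathcal{H}$ is the set of distributions over $\mathcal{H}$, $\pi(x):=\Pr_{h\sim\pi}[h(x)=1]$, and a hypothesis $h$ is identified with the point mass on $h$. An auditor $j$ has $d^j:\mathcal{X}^2\to[0,1]$ (nonnegative, symmetric); $\pi$ has an $\alpha$-violation on $(x,x')$ w.r.t. $j$ if $\pi(x)-\pi(x')>d^j(x,x')+\alpha$. The panel $\bar{j}^{\alpha,\gamma}_{j^1,\dots,j^m}$ maps $(\pi,\bar{x})$, $\bar{x}\in\mathcal{X}^k$, to some pair $(\bar{x}^s,\bar{x}^l)$ with $s\ne l$ on which at least $\lceil\gamma m\rceil$ of the auditors detect an $\alpha$-violation of $\pi$, if such a pair exists, and to $(v,v)$ for a fixed default $v\in\mathcal{X}$ otherwise. $Unfair^{\alpha,\gamma}(\pi,\bar{x},\bar{j})=1$ if the panel outputs a pair with $s\ne l$, and $0$ otherwise. *)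

theory Defs
  imports "HOL-Probability.Probability"
begin

text \<open>Hypotheses are functions h :: 'a => bool (h x = True means h(x) = 1).
  A randomized classifier pi is a pmf over hypotheses; a hypothesis h is the point mass return_pmf h.\<close>

definition pval :: "('a \<Rightarrow> bool) pmf \<Rightarrow> 'a \<Rightarrow> real" where
  "pval \<pi> x = measure_pmf.prob \<pi> {h. h x}"

definition auditor :: "'a set \<Rightarrow> ('a \<Rightarrow> 'a \<Rightarrow> real) \<Rightarrow> bool" where
  "auditor X d \<longleftrightarrow> (\<forall>x\<in>X. \<forall>y\<in>X. 0 \<le> d x y \<and> d x y \<le> 1 \<and> d x y = d y x)"

definition violation :: "real \<Rightarrow> ('a \<Rightarrow> 'a \<Rightarrow> real) \<Rightarrow> ('a \<Rightarrow> bool) pmf \<Rightarrow> 'a \<Rightarrow> 'a \<Rightarrow> bool" where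
  "violation \<alpha> d \<pi> x x' \<longleftrightarrow> pval \<pi> x - pval \<pi> x' > d x x' + \<alpha>"

definition panel_violating ::
  "real \<Rightarrow> real \<Rightarrow> ('a \<Rightarrow> 'a \<Rightarrow> real) list \<Rightarrow> ('a \<Rightarrow> bool) pmf \<Rightarrow> 'a list \<Rightarrow> nat \<Rightarrow> nat \<Rightarrow> bool" where
  "panel_violating \<alpha> \<gamma> ds \<pi> xs s l \<longleftrightarrow>
     s < length xs \<and> l < length xs \<and> s \<noteq> l \<and>
     int (card {i. i < length ds \<and> violation \<alpha> (ds ! i) \<pi> (xs ! s) (xs ! l)})
        \<ge> \<lceil>\<gamma> * real (length ds)\<rceil>"

text \<open>J is a panel for auditors ds with parameters alpha, gamma: it outputs (indices of)
  a pair (s,l) with s ~= l on which enough auditors detect a violation, if one exists,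
  and otherwise the default, a diagonal pair (s = l) standing for (v,v).\<close>
definition is_panel ::
  "real \<Rightarrow> real \<Rightarrow> ('a \<Rightarrow> 'a \<Rightarrow> real) list \<Rightarrow> (('a \<Rightarrow> bool) pmf \<Rightarrow> 'a list \<Rightarrow> nat \<times> nat) \<Rightarrow> bool" where
  "is_panel \<alpha> \<gamma> ds J \<longleftrightarrow>
     (\<forall>\<pi> xs. if (\<exists>s l. panel_violating \<alpha> \<gamma> ds \<pi> xs s l)
             then panel_violating \<alpha> \<gamma> ds \<pi> xs (fst (J \<pi> xs)) (snd (J \<pi> xs))
             else fst (J \<pi> xs) = snd (J \<pi> xs))"

definition Unfair :: "(('a \<Rightarrow> bool) pmf \<Rightarrow> 'a list \<Rightarrow> nat \<times> nat) \<Rightarrow> ('a \<Rightarrow> bool) pmf \<Rightarrow> 'a list \<Rightarrow> real" where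
  "Unfair J \<pi> xs = (if fst (J \<pi> xs) \<noteq> snd (J \<pi> xs) then 1 else 0)"

end

theory Submission
  imports Defs
begin

text \<open>Let \<open>\<pi>\<close> be the uniform mixture of the indicators of the (distinct) points of \<open>xs\<close>.
  Each indicator predicts 1 on its own point and 0 on every other one, a gap of 1, which all
  auditors flag as soon as their distances stay below \<open>1 - \<alpha>\<close>; so every hypothesis in the
  support of \<open>\<pi>\<close> is unfair. The mixture itself predicts \<open>1 / k\<close> on every point, and equal
  predictions violate nothing for \<open>\<alpha> > 0\<close>.\<close>

lemma pval_pmf_of_set:
  assumes "finite H" "H \<noteq> {}"
  shows "pval (pmf_of_set H) x = card {h\<in>H. h x} / card H"
  using assms unfolding pval_def by (simp add: measure_pmf_of_set Int_def)

lemma pval_uniform_point_indicators: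
  assumes "finite A" "x \<in> A"
  shows "pval (pmf_of_set ((=) ` A)) x = 1 / card A"
proof -
  have "inj_on (=) A"
    by (rule inj_onI) (metis)
  then have "card ((=) ` A) = card A"
    by (rule card_image)
  moreover have "{h \<in> (=) ` A. h x} = {(=) x}"
    using assms(2) by auto
  moreover have "pval (pmf_of_set ((=) ` A)) x = card {h \<in> (=) ` A. h x} / card ((=) ` A)"
    using assms by (intro pval_pmf_of_set) auto
  ultimately show ?thesis
    by simp
qed

lemma expectation_eq_const_on_set_pmf:
  fixes f :: "'a \<Rightarrow> real"
  assumes "\<And>x. x \<in> set_pmf p \<Longrightarrow> f x = c"
  shows "measure_pmf.expectation p f = c"
proof -
  have "measure_pmf.expectation p f = measure_pmf.expectation p (\<lambda>_. c)"
    using assms by (intro integral_cong_AE) (auto simp: AE_measure_pmf_iff)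
  then show ?thesis by simp
qed

lemma panel_exists: "\<exists>J. is_panel \<alpha> \<gamma> ds J"
proof
  let ?viol = "\<lambda>\<pi> xs p. panel_violating \<alpha> \<gamma> ds \<pi> xs (fst p) (snd p)"
  show "is_panel \<alpha> \<gamma> ds (\<lambda>\<pi> xs. if \<exists>p. ?viol \<pi> xs p then SOME p. ?viol \<pi> xs p else (0, 0))"
    unfolding is_panel_def by (auto intro: someI[where x="(_, _)"])
qed

lemma Unfair_panel:
  assumes "is_panel \<alpha> \<gamma> ds J"
  shows "Unfair J \<pi> xs = (if \<exists>s l. panel_violating \<alpha> \<gamma> ds \<pi> xs s l then 1 else 0)"
proof -
  have "if \<exists>s l. panel_violating \<alpha> \<gamma> ds \<pi> xs s l
        then panel_violating \<alpha> \<gamma> ds \<pi> xs (fst (J \<pi> xs)) (snd (J \<pi> xs))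
        else fst (J \<pi> xs) = snd (J \<pi> xs)"
    using assms unfolding is_panel_def by blast
  then show ?thesis
    unfolding Unfair_def panel_violating_def by (simp split: if_splits)
qed

lemma panel_violating_if_all_violate:
  assumes "s < length xs" "l < length xs" "s \<noteq> l" "\<gamma> \<le> 1"
    and "\<And>i. i < length ds \<Longrightarrow> violation \<alpha> (ds ! i) \<pi> (xs ! s) (xs ! l)"
  shows "panel_violating \<alpha> \<gamma> ds \<pi> xs s l"
proof -
  have "{i. i < length ds \<and> violation \<alpha> (ds ! i) \<pi> (xs ! s) (xs ! l)} = {..<length ds}"
    using assms(5) by blast
  then have card: "card {i. i < length ds \<and> violation \<alpha> (ds ! i) \<pi> (xs ! s) (xs ! l)} = length ds"
    by simp
  have "\<gamma> * real (length ds) \<le> real (length ds)"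
    using mult_right_mono[OF \<open>\<gamma> \<le> 1\<close>, of "real (length ds)"] by simp
  then have "\<lceil>\<gamma> * real (length ds)\<rceil> \<le> int (length ds)"
    by (simp add: ceiling_le_iff)
  with card assms(1-3) show ?thesis
    unfolding panel_violating_def by simp
qed

lemma panel_violating_imp_violation:
  assumes "panel_violating \<alpha> \<gamma> ds \<pi> xs s l" "0 < \<gamma>" "ds \<noteq> []"
  shows "\<exists>i < length ds. violation \<alpha> (ds ! i) \<pi> (xs ! s) (xs ! l)"
proof -
  have "0 < \<lceil>\<gamma> * real (length ds)\<rceil>"
    using assms(2,3) by simp
  with assms(1) have "{i. i < length ds \<and> violation \<alpha> (ds ! i) \<pi> (xs ! s) (xs ! l)} \<noteq> {}"
    unfolding panel_violating_def by (metis card.empty of_nat_0 not_less)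
  then show ?thesis by blast
qed

lemma point_indicator_panel_violating:
  assumes "s < length xs" "l < length xs" "xs ! s \<noteq> xs ! l" "\<gamma> \<le> 1"
    and "\<And>d. d \<in> set ds \<Longrightarrow> d (xs ! s) (xs ! l) + \<alpha> < 1"
  shows "panel_violating \<alpha> \<gamma> ds (return_pmf ((=) (xs ! s))) xs s l"
  using assms by (intro panel_violating_if_all_violate) (auto simp: violation_def pval_def)

lemma not_panel_violating_if_pval_const:
  assumes "0 < \<alpha>" "0 < \<gamma>" "ds \<noteq> []"
    and "\<And>d. d \<in> set ds \<Longrightarrow> auditor (set xs) d"
    and "\<And>x y. x \<in> set xs \<Longrightarrow> y \<in> set xs \<Longrightarrow> pval \<pi> x = pval \<pi> y"
  shows "\<not> panel_violating \<alpha> \<gamma> ds \<pi> xs s l"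
proof
  assume viol: "panel_violating \<alpha> \<gamma> ds \<pi> xs s l"
  then obtain i where i: "i < length ds" and v: "violation \<alpha> (ds ! i) \<pi> (xs ! s) (xs ! l)"
    using panel_violating_imp_violation assms(2,3) by blast
  have mem: "xs ! s \<in> set xs" "xs ! l \<in> set xs"
    using viol by (simp_all add: panel_violating_def)
  have "0 \<le> (ds ! i) (xs ! s) (xs ! l)"
    using assms(4)[OF nth_mem[OF i]] mem unfolding auditor_def by blast
  moreover have "pval \<pi> (xs ! s) = pval \<pi> (xs ! l)"
    using assms(5) mem by blast
  ultimately show False
    using v assms(1) unfolding violation_def by linarith
qed

lemma Unfair_point_indicator:
  assumes "is_panel \<alpha> \<gamma> ds J" "\<gamma> \<le> 1" "distinct xs" "2 \<le> length xs" "s < length xs"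
    and "\<And>d x y. d \<in> set ds \<Longrightarrow> d x y + \<alpha> < 1"
  shows "Unfair J (return_pmf ((=) (xs ! s))) xs = 1"
proof -
  define l :: nat where "l = (if s = 0 then 1 else 0)"
  have "l < length xs" "l \<noteq> s"
    using assms(4) by (auto simp: l_def)
  then have "panel_violating \<alpha> \<gamma> ds (return_pmf ((=) (xs ! s))) xs s l"
    using assms(2,3,5,6) by (intro point_indicator_panel_violating) (simp_all add: nth_eq_iff_index_eq)
  then show ?thesis
    by (auto simp: Unfair_panel[OF assms(1)])
qed

lemma Unfair_uniform_point_indicators:
  assumes "is_panel \<alpha> \<gamma> ds J" "0 < \<alpha>" "0 < \<gamma>" "ds \<noteq> []"
    and "\<And>d. d \<in> set ds \<Longrightarrow> auditor (set xs) d"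
  shows "Unfair J (pmf_of_set ((=) ` set xs)) xs = 0"
proof -
  have "pval (pmf_of_set ((=) ` set xs)) x = pval (pmf_of_set ((=) ` set xs)) y"
    if "x \<in> set xs" "y \<in> set xs" for x y
    using that by (simp add: pval_uniform_point_indicators)
  then have "\<not> panel_violating \<alpha> \<gamma> ds (pmf_of_set ((=) ` set xs)) xs s l" for s l
    using assms(2-5) by (rule not_panel_violating_if_pval_const[rotated -1])
  then show ?thesis
    by (simp add: Unfair_panel[OF assms(1)])
qed

theorem lemma5:
  shows "\<exists>(\<alpha>::real) (\<gamma>::real) (m::nat) (k::nat) (X::nat set) (H::(nat \<Rightarrow> bool) set)
            (xs::nat list) (ds::(nat \<Rightarrow> nat \<Rightarrow> real) list)
            (J::(nat \<Rightarrow> bool) pmf \<Rightarrow> nat list \<Rightarrow> nat \<times> nat) (\<pi>::(nat \<Rightarrow> bool) pmf).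
     \<alpha> > 0 \<and> 0 < \<gamma> \<and> \<gamma> \<le> 1 \<and> m \<ge> 1 \<and> k \<ge> 2 \<and>
     length xs = k \<and> set xs \<subseteq> X \<and>
     length ds = m \<and> (\<forall>d\<in>set ds. auditor X d) \<and>
     is_panel \<alpha> \<gamma> ds J \<and>
     set_pmf \<pi> \<subseteq> H \<and>
     measure_pmf.expectation \<pi> (\<lambda>h. Unfair J (return_pmf h) xs) = 1 \<and>
     Unfair J \<pi> xs = 0"
proof -
  define xs :: "nat list" where "xs = [0, 1]"
  define ds :: "(nat \<Rightarrow> nat \<Rightarrow> real) list" where "ds = [\<lambda>_ _. 0]"
  define \<pi> where "\<pi> = pmf_of_set ((=) ` set xs)"
  obtain J where J: "is_panel (1/2) 1 ds J"
    using panel_exists by blast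
  have auditors: "auditor X d" if "d \<in> set ds" for X d
    using that by (simp add: ds_def auditor_def)
  have fair: "Unfair J \<pi> xs = 0"
    unfolding \<pi>_def by (intro Unfair_uniform_point_indicators[OF J]) (simp_all add: ds_def auditors)
  have expectation: "measure_pmf.expectation \<pi> (\<lambda>h. Unfair J (return_pmf h) xs) = 1"
  proof (rule expectation_eq_const_on_set_pmf)
    fix h
    assume "h \<in> set_pmf \<pi>"
    moreover have "set_pmf \<pi> = (=) ` set xs"
      by (simp add: \<pi>_def xs_def)
    ultimately obtain s where s: "s < length xs" and h: "h = (=) (xs ! s)"
      by (auto simp: in_set_conv_nth)
    show "Unfair J (return_pmf h) xs = 1"
      unfolding h using s by (intro Unfair_point_indicator[OF J]) (simp_all add: xs_def ds_def)
  qed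
  have sizes: "length xs = 2" "length ds = 1" "\<forall>d\<in>set ds. auditor UNIV d"
    by (simp_all add: xs_def ds_def auditors)
  show ?thesis
    by (rule exI[of _ "1/2"], rule exI[of _ 1], rule exI[of _ 1], rule exI[of _ 2],
        rule exI[of _ UNIV], rule exI[of _ UNIV], rule exI[of _ xs], rule exI[of _ ds],
        rule exI[of _ J], rule exI[of _ \<pi>])
      (simp add: fair J expectation sizes)
qed

end
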